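(* Let $n_1,\dots,n_k>1$ be integers and let $(\mathbb{Z},\Lambda)$ be the product of odometers described in the context, and put $n=(n_1,\dots,n_k)$, $n^p=\prod_{i=1}^kn_i^{p_i}$ for $p\in\mathbb{Z}^k$. Then $$\mathrm{Per}_{\mathbb{Z},\Lambda}=\mathrm{Per}_\Lambda=\{p\in\mathbb{Z}^k:n^p=1\}.$$
   Context: Let $k\ge1$. A $k$-graph is a countable small category $\Lambda$ together with a functor $d:\Lambda\to\mathbb{N}^k$ (the degree map) with the unique factorization property: for every $\mu\in\Lambda$ and $m,n\in\mathbb{N}^k$ with $d(\mu)=m+n$ there are unique $\alpha,\beta\in\Lambda$ with $d(\alpha)=m$, $d(\beta)=n$ and $\mu=\alpha\beta$. Write $\Lambda^n=d^{-1}(n)$, $\Lambda^0$ the vertices, $r,s$ range and source; $e_1,\dots,e_k$ is the standard basis of $\mathbb{N}^k$. Infinite paths: let $\Omega_k=\{(p,q)\in\mathbb{N}^k\times\mathbb{N}^k:p\le q\}$ with $r(p,q)=(p,p)$, $s(p,q)=(q,q)$, $(p,q)(q,m)=(p,m)$, $d(p,q)=q-p$. An infinite path is a degree-preserving functor $x:\Omega_k\to\Lambda$; $\Lambda^\infty$ is the set of infinite paths, $v\Lambda^\infty=\{x:x(0,0)=v\}$, and for $\mu\in\Lambda$, $x\in s(\mu)\Lambda^\infty$, $\mu x$ is the unique infinite path $y$ with $y(0,d(\mu))=\mu$ and $y(d(\mu)+p,d(\mu)+q)=x(p,q)$ for all $p\le q$. Self-similar actions: for a group $G$, a self-similar action $(G,\Lambda)$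 consists of an action of $G$ on $\Lambda$ by automorphisms (bijections preserving $d$, $r$, $s$), written $g\cdot\mu$, and a restriction map $(g,\mu)\mapsto g|_\mu\in G$ such that for all $g,h\in G$, $v\in\Lambda^0$ and $\mu,\nu$ with $s(\mu)=r(\nu)$: $g\cdot(\mu\nu)=(g\cdot\mu)(g|_\mu\cdot\nu)$; $g|_v=g$; $g|_{\mu\nu}=(g|_\mu)|_\nu$; $1_G|_\mu=1_G$; $(gh)|_\mu=g|_{h\cdot\mu}\,h|_\mu$. For $x\in\Lambda^\infty$, $(g\cdot x)(p,q)=g|_{x(0,p)}\cdot x(p,q)$. Products of odometers: $\Lambda$ is a $k$-graph with a single vertex such that $\Lambda^{e_i}=\{x^i_{\mathfrak s}:0\le\mathfrak{s}\le n_i-1\}$ for $1\le i\le k$, with factorization rules $x^i_{\mathfrak s}x^j_{\mathfrak t}=x^j_{\mathfrak t'}x^i_{\mathfrak s'}$ for $1\le i<j\le k$ whenever $\mathfrak{s},\mathfrak{s}'\in\{0,\dots,n_i-1\}$, $\mathfrak{t},\mathfrak{t}'\in\{0,\dots,n_j-1\}$ and $\mathfrak{s}+\mathfrak{t}n_i=\mathfrak{t}'+\mathfrak{s}'n_j$. The group $\mathbb{Z}$ acts self-similarly on $\Lambda$, determined by $1\cdot x^i_{\mathfrak s}=x^i_{(\mathfrak{s}+1)\bmod n_i}$ and $1|_{x^i_{\mathfrak s}}=0$ if $\mathfrak{s}<n_i-1$, $1|_{x^i_{n_i-1}}=1$. This action is pseudo free, locally faithful, satisfies the finite-state condition, and $\Lambda$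 is strongly connected and finite. Cycline triples and periodicity: a triple $(\mu,g,\nu)\in\Lambda\times G\times\Lambda$ with $s(\mu)=g\cdot s(\nu)$ is cycline if $\mu(g\cdot x)=\nu x$ for all $x\in s(\nu)\Lambda^\infty$. $\mathrm{Per}_{G,\Lambda}=\{d(\mu)-d(\nu):(\mu,g,\nu)\text{ cycline}\}\subseteq\mathbb{Z}^k$, and $\mathrm{Per}_\Lambda=\{d(\mu)-d(\nu):(\mu,1_G,\nu)\text{ cycline}\}$ (i.e. from pairs $(\mu,\nu)$ with $\mu x=\nu x$ for all $x\in s(\nu)\Lambda^\infty$). *)

theory Defs
  imports Complex_Main "HOL-Library.Countable_Set"
begin

text \<open>The rank k is a natural number; coordinates are indexed by
  0,...,k-1 (the paper's index i corresponds to i-1 here).  An element of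
  N^k (resp. Z^k) is a function nat => nat (resp. nat => int) vanishing at all
  indices >= k.  The group G is (int,+,0); 1_G is 0.\<close>

definition Nk :: "nat \<Rightarrow> (nat \<Rightarrow> nat) set" where
  "Nk k = {m. \<forall>j\<ge>k. m j = 0}"

definition Zk :: "nat \<Rightarrow> (nat \<Rightarrow> int) set" where
  "Zk k = {p. \<forall>j\<ge>k. p j = 0}"

definition unitvec :: "nat \<Rightarrow> nat \<Rightarrow> nat" where
  "unitvec i = (\<lambda>j. if j = i then 1 else 0)"

text \<open>A category presented by its set of morphisms, range, source, composition
  (comp a b = ab, defined when src a = rng b) and a degree map.\<close>

record 'a kgraph =
  Mor :: "'a set"
  rng :: "'a \<Rightarrow> 'a"
  src :: "'a \<Rightarrow> 'a"
  cmp :: "'a \<Rightarrow> 'a \<Rightarrow> 'a"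
  deg :: "'a \<Rightarrow> nat \<Rightarrow> nat"

definition vertices :: "('a, 'b) kgraph_scheme \<Rightarrow> 'a set" where
  "vertices L = {v \<in> Mor L. deg L v = (\<lambda>_. 0)}"

definition is_kgraph :: "nat \<Rightarrow> ('a, 'b) kgraph_scheme \<Rightarrow> bool" where
  "is_kgraph k L \<longleftrightarrow>
     countable (Mor L) \<and>
     \<comment> \<open>small category, objects identified with identity morphisms\<close>
     (\<forall>a\<in>Mor L. rng L a \<in> Mor L \<and> src L a \<in> Mor L \<and>
        rng L (rng L a) = rng L a \<and> src L (rng L a) = rng L a \<and>
        rng L (src L a) = src L a \<and> src L (src L a) = src L a \<and>
        cmp L (rng L a) a = a \<and> cmp L a (src L a) = a) \<and>
     (\<forall>a\<in>Mor L. \<forall>b\<in>Mor L. src L a = rng L b \<longrightarrow>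
        cmp L a b \<in> Mor L \<and> rng L (cmp L a b) = rng L a \<and> src L (cmp L a b) = src L b) \<and>
     (\<forall>a\<in>Mor L. \<forall>b\<in>Mor L. \<forall>c\<in>Mor L. src L a = rng L b \<longrightarrow> src L b = rng L c \<longrightarrow>
        cmp L (cmp L a b) c = cmp L a (cmp L b c)) \<and>
     \<comment> \<open>degree functor into N^k\<close>
     (\<forall>a\<in>Mor L. deg L a \<in> Nk k) \<and>
     (\<forall>a\<in>Mor L. deg L (rng L a) = (\<lambda>_. 0)) \<and>
     (\<forall>a\<in>Mor L. \<forall>b\<in>Mor L. src L a = rng L b \<longrightarrow>
        deg L (cmp L a b) = (\<lambda>j. deg L a j + deg L b j)) \<and>
     \<comment> \<open>unique factorisation property\<close>
     (\<forall>a\<in>Mor L. \<forall>m\<in>Nk k. \<forall>n\<in>Nk k. deg L a = (\<lambda>j. m j + n j) \<longrightarrow>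
        (\<exists>!(\<alpha>, \<beta>). \<alpha> \<in> Mor L \<and> \<beta> \<in> Mor L \<and> src L \<alpha> = rng L \<beta> \<and>
            deg L \<alpha> = m \<and> deg L \<beta> = n \<and> a = cmp L \<alpha> \<beta>))"

text \<open>Infinite paths: degree-preserving functors from Omega_k, represented as
  functions of (p,q), extensional (undefined) outside Omega_k.\<close>

definition in_Omega :: "nat \<Rightarrow> (nat \<Rightarrow> nat) \<Rightarrow> (nat \<Rightarrow> nat) \<Rightarrow> bool" where
  "in_Omega k p q \<longleftrightarrow> p \<in> Nk k \<and> q \<in> Nk k \<and> p \<le> q"

definition infpaths :: "nat \<Rightarrow> ('a, 'b) kgraph_scheme
    \<Rightarrow> ((nat \<Rightarrow> nat) \<Rightarrow> (nat \<Rightarrow> nat) \<Rightarrow> 'a) set" where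
  "infpaths k L = {x.
     (\<forall>p q. in_Omega k p q \<longrightarrow>
        x p q \<in> Mor L \<and> deg L (x p q) = (\<lambda>j. q j - p j) \<and>
        rng L (x p q) = x p p \<and> src L (x p q) = x q q) \<and>
     (\<forall>p q m. in_Omega k p q \<longrightarrow> in_Omega k q m \<longrightarrow> cmp L (x p q) (x q m) = x p m) \<and>
     (\<forall>p q. \<not> in_Omega k p q \<longrightarrow> x p q = undefined)}"

definition infpaths_from :: "nat \<Rightarrow> ('a, 'b) kgraph_scheme \<Rightarrow> 'a
    \<Rightarrow> ((nat \<Rightarrow> nat) \<Rightarrow> (nat \<Rightarrow> nat) \<Rightarrow> 'a) set" where
  "infpaths_from k L v = {x \<in> infpaths k L. x (\<lambda>_. 0) (\<lambda>_. 0) = v}"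

definition prepend :: "nat \<Rightarrow> ('a, 'b) kgraph_scheme \<Rightarrow> 'a
    \<Rightarrow> ((nat \<Rightarrow> nat) \<Rightarrow> (nat \<Rightarrow> nat) \<Rightarrow> 'a) \<Rightarrow> ((nat \<Rightarrow> nat) \<Rightarrow> (nat \<Rightarrow> nat) \<Rightarrow> 'a)" where
  "prepend k L \<mu> x = (THE y. y \<in> infpaths k L \<and> y (\<lambda>_. 0) (deg L \<mu>) = \<mu> \<and>
      (\<forall>p q. in_Omega k p q \<longrightarrow>
         y (\<lambda>j. deg L \<mu> j + p j) (\<lambda>j. deg L \<mu> j + q j) = x p q))"

definition self_similar_int :: "nat \<Rightarrow> ('a, 'b) kgraph_scheme
    \<Rightarrow> (int \<Rightarrow> 'a \<Rightarrow> 'a) \<Rightarrow> (int \<Rightarrow> 'a \<Rightarrow> int) \<Rightarrow> bool" where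
  "self_similar_int k L act res \<longleftrightarrow>
     \<comment> \<open>group action by automorphisms\<close>
     (\<forall>a\<in>Mor L. act 0 a = a) \<and>
     (\<forall>g h. \<forall>a\<in>Mor L. act (g + h) a = act g (act h a)) \<and>
     (\<forall>g. bij_betw (act g) (Mor L) (Mor L)) \<and>
     (\<forall>g. \<forall>a\<in>Mor L. deg L (act g a) = deg L a \<and>
        rng L (act g a) = act g (rng L a) \<and> src L (act g a) = act g (src L a)) \<and>
     \<comment> \<open>self-similarity axioms\<close>
     (\<forall>g. \<forall>a\<in>Mor L. \<forall>b\<in>Mor L. src L a = rng L b \<longrightarrow>
        act g (cmp L a b) = cmp L (act g a) (act (res g a) b)) \<and>
     (\<forall>g. \<forall>v\<in>vertices L. res g v = g) \<and>
     (\<forall>g. \<forall>a\<in>Mor L. \<forall>b\<in>Mor L. src L a = rng L b \<longrightarrow>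
        res g (cmp L a b) = res (res g a) b) \<and>
     (\<forall>a\<in>Mor L. res 0 a = 0) \<and>
     (\<forall>g h. \<forall>a\<in>Mor L. res (g + h) a = res g (act h a) + res h a)"

definition act_inf :: "nat \<Rightarrow> (int \<Rightarrow> 'a \<Rightarrow> 'a) \<Rightarrow> (int \<Rightarrow> 'a \<Rightarrow> int) \<Rightarrow> int
    \<Rightarrow> ((nat \<Rightarrow> nat) \<Rightarrow> (nat \<Rightarrow> nat) \<Rightarrow> 'a) \<Rightarrow> ((nat \<Rightarrow> nat) \<Rightarrow> (nat \<Rightarrow> nat) \<Rightarrow> 'a)" where
  "act_inf k act res g x = (\<lambda>p q. if in_Omega k p q
       then act (res g (x (\<lambda>_. 0) p)) (x p q) else undefined)"

definition cycline :: "nat \<Rightarrow> ('a, 'b) kgraph_scheme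
    \<Rightarrow> (int \<Rightarrow> 'a \<Rightarrow> 'a) \<Rightarrow> (int \<Rightarrow> 'a \<Rightarrow> int) \<Rightarrow> 'a \<Rightarrow> int \<Rightarrow> 'a \<Rightarrow> bool" where
  "cycline k L act res \<mu> g \<nu> \<longleftrightarrow>
     \<mu> \<in> Mor L \<and> \<nu> \<in> Mor L \<and> src L \<mu> = act g (src L \<nu>) \<and>
     (\<forall>x\<in>infpaths_from k L (src L \<nu>).
        prepend k L \<mu> (act_inf k act res g x) = prepend k L \<nu> x)"

definition degdiff :: "('a, 'b) kgraph_scheme \<Rightarrow> 'a \<Rightarrow> 'a \<Rightarrow> nat \<Rightarrow> int" where
  "degdiff L \<mu> \<nu> = (\<lambda>j. int (deg L \<mu> j) - int (deg L \<nu> j))"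

definition Per_GL :: "nat \<Rightarrow> ('a, 'b) kgraph_scheme
    \<Rightarrow> (int \<Rightarrow> 'a \<Rightarrow> 'a) \<Rightarrow> (int \<Rightarrow> 'a \<Rightarrow> int) \<Rightarrow> (nat \<Rightarrow> int) set" where
  "Per_GL k L act res = {degdiff L \<mu> \<nu> | \<mu> g \<nu>. cycline k L act res \<mu> g \<nu>}"

definition Per_L :: "nat \<Rightarrow> ('a, 'b) kgraph_scheme
    \<Rightarrow> (int \<Rightarrow> 'a \<Rightarrow> 'a) \<Rightarrow> (int \<Rightarrow> 'a \<Rightarrow> int) \<Rightarrow> (nat \<Rightarrow> int) set" where
  "Per_L k L act res = {degdiff L \<mu> \<nu> | \<mu> \<nu>. cycline k L act res \<mu> 0 \<nu>}"

definition product_of_odometers :: "nat \<Rightarrow> (nat \<Rightarrow> nat) \<Rightarrow> ('a, 'b) kgraph_scheme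
    \<Rightarrow> (nat \<Rightarrow> nat \<Rightarrow> 'a) \<Rightarrow> (int \<Rightarrow> 'a \<Rightarrow> 'a) \<Rightarrow> (int \<Rightarrow> 'a \<Rightarrow> int) \<Rightarrow> bool" where
  "product_of_odometers k n L x act res \<longleftrightarrow>
     is_kgraph k L \<and>
     (\<exists>v. vertices L = {v}) \<and>
     (\<forall>i<k. {a \<in> Mor L. deg L a = unitvec i} = x i ` {..<n i} \<and> inj_on (x i) {..<n i}) \<and>
     (\<forall>i j s s' t t'. i < j \<longrightarrow> j < k \<longrightarrow> s < n i \<longrightarrow> s' < n i \<longrightarrow> t < n j \<longrightarrow> t' < n j \<longrightarrow>
        s + t * n i = t' + s' * n j \<longrightarrow>
        cmp L (x i s) (x j t) = cmp L (x j t') (x i s')) \<and>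
     self_similar_int k L act res \<and>
     (\<forall>i<k. \<forall>s<n i. act 1 (x i s) = x i ((s + 1) mod n i) \<and>
        res 1 (x i s) = (if s < n i - 1 then 0 else 1))"

end

theory Submission
  imports Defs
begin

text \<open>Write \<open>npow m = \<Prod>i<k. n i ^ m i\<close> and \<open>0\<^sub>m\<close> for the path of degree \<open>m\<close> made of the
  edges \<open>x i 0\<close>. The group \<open>\<int>\<close> acts transitively on the paths of degree \<open>m\<close>, the stabiliser
  of \<open>0\<^sub>m\<close> is \<open>npow m \<cdot> \<int>\<close> and \<open>t|\<^sub>0\<^sub>m = t div npow m\<close>: the action is the odometer on
  \<open>\<int>/npow m\<close>, and \<open>0\<^sub>a 0\<^sub>b = 0\<^sub>a\<^sub>+\<^sub>b\<close>. The infinite paths \<open>t \<cdot> 000\<dots>\<close> satisfy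
  \<open>g \<cdot> (t \<cdot> 000\<dots>) = (g + t) \<cdot> 000\<dots>\<close> and \<open>(K \<cdot> 0\<^sub>a)(t \<cdot> 000\<dots>) = (K + npow a \<cdot> t) \<cdot> 000\<dots>\<close>.
  Testing a cycline triple \<open>(\<mu>, g, \<nu>)\<close> on \<open>t \<cdot> 000\<dots>\<close> for two consecutive \<open>t\<close> shows that
  \<open>npow (d \<mu>) \<cdot> npow (d \<nu>)\<close> divides \<open>npow (d \<mu>) - npow (d \<nu>)\<close>, so the two are equal, which
  is \<open>n\<^sup>p = 1\<close> for \<open>p = d \<mu> - d \<nu>\<close>. Conversely, if \<open>npow a = npow b\<close> then \<open>0\<^sub>a x = 0\<^sub>b x\<close> for
  every infinite path \<open>x\<close>, so \<open>(0\<^sub>a, 0, 0\<^sub>b)\<close> is cycline with degree difference \<open>a - b\<close>.\<close>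

lemma dvd_of_div_add_eq:
  fixes N d :: nat
  assumes N: "0 < N" and div_add: "\<And>j. (j + d) div N = j div N + d div N"
  shows "N dvd d"
proof (rule ccontr)
  assume "\<not> N dvd d"
  then have r: "0 < d mod N" "d mod N < N"
    using N by (simp_all add: dvd_eq_mod_eq_0)
  have "N - d mod N + d = N * (d div N + 1)"
    unfolding distrib_left mult_1_right using r(2) mult_div_mod_eq[of N d] by linarith
  then have "(N - d mod N + d) div N = d div N + 1"
    using N by simp
  moreover have "(N - d mod N) div N = 0"
    using r by simp
  ultimately show False
    using div_add[of "N - d mod N"] by simp
qed

lemma mult_dvd_diff_imp_eq:
  fixes a b :: int
  assumes "0 < a" "0 < b" "a * b dvd a - b"
  shows "a = b"
proof (rule ccontr)
  assume "a \<noteq> b"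
  then have "\<bar>a * b\<bar> \<le> \<bar>a - b\<bar>"
    using assms(3) dvd_imp_le_int by simp
  moreover have "a \<le> a * b" "b \<le> a * b"
    using assms(1,2) by (simp_all add: mult_le_cancel_left1 mult_le_cancel_right1)
  ultimately show False
    using assms(1,2) \<open>a \<noteq> b\<close> by arith
qed

section \<open>Infinite paths in \<open>k\<close>-graphs\<close>

lemma in_Omega_zero: "q \<in> Nk k \<Longrightarrow> in_Omega k (\<lambda>_. 0) q"
  by (auto simp: in_Omega_def Nk_def le_fun_def)

lemma in_Omega_shift:
  "in_Omega k p q \<Longrightarrow> a \<in> Nk k \<Longrightarrow> in_Omega k (\<lambda>j. a j + p j) (\<lambda>j. a j + q j)"
  by (auto simp: in_Omega_def Nk_def le_fun_def)

lemma in_Omega_add: "a \<in> Nk k \<Longrightarrow> q \<in> Nk k \<Longrightarrow> in_Omega k a (\<lambda>j. a j + q j)"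
  by (auto simp: in_Omega_def Nk_def le_fun_def)

lemma in_Omega_trans: "in_Omega k p q \<Longrightarrow> in_Omega k q r \<Longrightarrow> in_Omega k p r"
  by (auto simp: in_Omega_def)

lemma Nk_add: "a \<in> Nk k \<Longrightarrow> b \<in> Nk k \<Longrightarrow> (\<lambda>j. a j + b j) \<in> Nk k"
  by (auto simp: Nk_def)

lemma Nk_diff: "a \<in> Nk k \<Longrightarrow> (\<lambda>j. a j - b j) \<in> Nk k"
  by (auto simp: Nk_def)

lemma Nk_zero: "(\<lambda>_. 0) \<in> Nk k"
  by (auto simp: Nk_def)

lemma Nk_unitvec: "i < k \<Longrightarrow> unitvec i \<in> Nk k"
  by (auto simp: Nk_def unitvec_def)

locale kgraph =
  fixes k :: nat and L :: "('a, 'b) kgraph_scheme"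
  assumes is_kgraph: "is_kgraph k L"
begin

lemma category_axioms:
  "\<forall>a\<in>Mor L. rng L a \<in> Mor L \<and> src L a \<in> Mor L \<and>
     rng L (rng L a) = rng L a \<and> src L (rng L a) = rng L a \<and>
     rng L (src L a) = src L a \<and> src L (src L a) = src L a \<and>
     cmp L (rng L a) a = a \<and> cmp L a (src L a) = a"
  using is_kgraph unfolding is_kgraph_def by (elim conjE) assumption

lemma cmp_axioms: "\<forall>a\<in>Mor L. \<forall>b\<in>Mor L. src L a = rng L b \<longrightarrow>
     cmp L a b \<in> Mor L \<and> rng L (cmp L a b) = rng L a \<and> src L (cmp L a b) = src L b"
  using is_kgraph unfolding is_kgraph_def by (elim conjE) assumption

lemma assoc_axiom: "\<forall>a\<in>Mor L. \<forall>b\<in>Mor L. \<forall>c\<in>Mor L. src L a = rng L b \<longrightarrow> src L b = rng L c \<longrightarrow>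
     cmp L (cmp L a b) c = cmp L a (cmp L b c)"
  using is_kgraph unfolding is_kgraph_def by (elim conjE) assumption

lemma degree_axioms: "(\<forall>a\<in>Mor L. deg L a \<in> Nk k) \<and> (\<forall>a\<in>Mor L. deg L (rng L a) = (\<lambda>_. 0)) \<and>
    (\<forall>a\<in>Mor L. \<forall>b\<in>Mor L. src L a = rng L b \<longrightarrow> deg L (cmp L a b) = (\<lambda>j. deg L a j + deg L b j))"
  using is_kgraph unfolding is_kgraph_def by (elim conjE) (intro conjI; assumption)

lemma factorisation_axiom: "\<forall>a\<in>Mor L. \<forall>m\<in>Nk k. \<forall>n\<in>Nk k. deg L a = (\<lambda>j. m j + n j) \<longrightarrow>
     (\<exists>!(\<alpha>, \<beta>). \<alpha> \<in> Mor L \<and> \<beta> \<in> Mor L \<and> src L \<alpha> = rng L \<beta> \<and>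
       deg L \<alpha> = m \<and> deg L \<beta> = n \<and> a = cmp L \<alpha> \<beta>)"
  using is_kgraph unfolding is_kgraph_def by (elim conjE) assumption

lemma rng_in_Mor: "a \<in> Mor L \<Longrightarrow> rng L a \<in> Mor L"
  and src_in_Mor: "a \<in> Mor L \<Longrightarrow> src L a \<in> Mor L"
  and rng_src: "a \<in> Mor L \<Longrightarrow> rng L (src L a) = src L a"
  and cmp_src_right: "a \<in> Mor L \<Longrightarrow> cmp L a (src L a) = a"
  using category_axioms by simp_all

lemma deg_in_Nk: "a \<in> Mor L \<Longrightarrow> deg L a \<in> Nk k"
  and deg_rng: "a \<in> Mor L \<Longrightarrow> deg L (rng L a) = (\<lambda>_. 0)"
  using degree_axioms by simp_all

lemma cmp_in_Mor: "a \<in> Mor L \<Longrightarrow> b \<in> Mor L \<Longrightarrow> src L a = rng L b \<Longrightarrow> cmp L a b \<in> Mor L"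
  and src_cmp: "a \<in> Mor L \<Longrightarrow> b \<in> Mor L \<Longrightarrow> src L a = rng L b \<Longrightarrow> src L (cmp L a b) = src L b"
  using cmp_axioms by simp_all

lemma deg_cmp: "a \<in> Mor L \<Longrightarrow> b \<in> Mor L \<Longrightarrow> src L a = rng L b \<Longrightarrow>
    deg L (cmp L a b) = (\<lambda>j. deg L a j + deg L b j)"
  using degree_axioms by simp

lemma cmp_assoc:
  "a \<in> Mor L \<Longrightarrow> b \<in> Mor L \<Longrightarrow> c \<in> Mor L \<Longrightarrow> src L a = rng L b \<Longrightarrow> src L b = rng L c \<Longrightarrow>
    cmp L (cmp L a b) c = cmp L a (cmp L b c)"
  using assoc_axiom by simp

lemma unique_factorisation:
  "a \<in> Mor L \<Longrightarrow> m \<in> Nk k \<Longrightarrow> m' \<in> Nk k \<Longrightarrow> deg L a = (\<lambda>j. m j + m' j) \<Longrightarrow>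
    \<exists>!(\<alpha>, \<beta>). \<alpha> \<in> Mor L \<and> \<beta> \<in> Mor L \<and> src L \<alpha> = rng L \<beta> \<and>
      deg L \<alpha> = m \<and> deg L \<beta> = m' \<and> a = cmp L \<alpha> \<beta>"
  using factorisation_axiom by blast

lemma factorisation_exists:
  assumes "a \<in> Mor L" "m \<in> Nk k" "m' \<in> Nk k" "deg L a = (\<lambda>j. m j + m' j)"
  obtains \<alpha> \<beta> where "\<alpha> \<in> Mor L" "\<beta> \<in> Mor L" "src L \<alpha> = rng L \<beta>"
    "deg L \<alpha> = m" "deg L \<beta> = m'" "a = cmp L \<alpha> \<beta>"
  using unique_factorisation[OF assms] by auto

lemma factorisation_unique:
  assumes "a \<in> Mor L" "b \<in> Mor L" "src L a = rng L b"
    and "a' \<in> Mor L" "b' \<in> Mor L" "src L a' = rng L b'"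
    and "deg L a = deg L a'" "cmp L a b = cmp L a' b'"
  shows "a = a'" "b = b'"
proof -
  have "deg L b = deg L b'"
    using deg_cmp[OF assms(1-3)] deg_cmp[OF assms(4-6)] assms(7,8) by (simp add: fun_eq_iff)
  moreover have "\<exists>!(\<alpha>, \<beta>). \<alpha> \<in> Mor L \<and> \<beta> \<in> Mor L \<and> src L \<alpha> = rng L \<beta> \<and>
      deg L \<alpha> = deg L a \<and> deg L \<beta> = deg L b \<and> cmp L a b = cmp L \<alpha> \<beta>"
    by (rule unique_factorisation[OF cmp_in_Mor[OF assms(1-3)] deg_in_Nk[OF assms(1)]
          deg_in_Nk[OF assms(2)] deg_cmp[OF assms(1-3)]])
  ultimately have "(a, b) = (a', b')"
    using assms unfolding Ex1_def by (metis (mono_tags, lifting) case_prod_conv)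
  then show "a = a'" "b = b'" by simp_all
qed

lemma path_in_Mor:
  assumes "y \<in> infpaths k L" "in_Omega k p q"
  shows "y p q \<in> Mor L" "deg L (y p q) = (\<lambda>j. q j - p j)"
    "rng L (y p q) = y p p" "src L (y p q) = y q q"
  using assms unfolding infpaths_def by auto

lemma path_cmp:
  "y \<in> infpaths k L \<Longrightarrow> in_Omega k p q \<Longrightarrow> in_Omega k q r \<Longrightarrow> cmp L (y p q) (y q r) = y p r"
  unfolding infpaths_def by auto

lemma path_factors:
  assumes y: "y \<in> infpaths k L" and pq: "in_Omega k p q" and qr: "in_Omega k q r"
    and "\<alpha> \<in> Mor L" "\<beta> \<in> Mor L" "src L \<alpha> = rng L \<beta>" "deg L \<alpha> = (\<lambda>j. q j - p j)"
    and "y p r = cmp L \<alpha> \<beta>"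
  shows "y p q = \<alpha>" "y q r = \<beta>"
  using factorisation_unique[of "y p q" "y q r" \<alpha> \<beta>] path_in_Mor[OF y pq] path_in_Mor[OF y qr]
    path_cmp[OF y pq qr] assms by auto

lemma path_eqI:
  assumes y: "y \<in> infpaths k L" and y': "y' \<in> infpaths k L" and a: "a \<in> Nk k"
    and initial: "\<And>c. c \<in> Nk k \<Longrightarrow> y (\<lambda>_. 0) (\<lambda>j. a j + c j) = y' (\<lambda>_. 0) (\<lambda>j. a j + c j)"
  shows "y = y'"
proof (intro ext)
  have initial': "y (\<lambda>_. 0) q = y' (\<lambda>_. 0) q" if q: "q \<in> Nk k" for q
  proof -
    have 0: "in_Omega k (\<lambda>_. 0) q" and 1: "in_Omega k q (\<lambda>j. a j + q j)"
      using in_Omega_zero[OF q] in_Omega_add[OF q a] by (simp_all add: add.commute)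
    have "y (\<lambda>_. 0) (\<lambda>j. a j + q j) = cmp L (y' (\<lambda>_. 0) q) (y' q (\<lambda>j. a j + q j))"
      using initial[OF q] path_cmp[OF y' 0 1] by simp
    then show ?thesis
      using path_factors(1)[OF y 0 1] path_in_Mor[OF y' 0] path_in_Mor[OF y' 1] by simp
  qed
  fix p q
  show "y p q = y' p q"
  proof (cases "in_Omega k p q")
    case True
    then have p: "in_Omega k (\<lambda>_. 0) p" and q: "q \<in> Nk k"
      using in_Omega_zero unfolding in_Omega_def by auto
    have "y (\<lambda>_. 0) q = cmp L (y' (\<lambda>_. 0) p) (y' p q)"
      using initial'[OF q] path_cmp[OF y' p True] by simp
    then show ?thesis
      using path_factors(2)[OF y p True] path_in_Mor[OF y' p] path_in_Mor[OF y' True] by simp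
  next
    case False
    then show ?thesis using y y' unfolding infpaths_def by auto
  qed
qed

lemma shifted_path_eq_of_initial:
  assumes \<mu>: "\<mu> \<in> Mor L" and x: "x \<in> infpaths k L" and x0: "x (\<lambda>_. 0) (\<lambda>_. 0) = src L \<mu>"
    and y: "y \<in> infpaths k L"
    and initial: "\<forall>c\<in>Nk k. y (\<lambda>_. 0) (\<lambda>j. deg L \<mu> j + c j) = cmp L \<mu> (x (\<lambda>_. 0) c)"
    and pq: "in_Omega k p q"
  shows "y (\<lambda>j. deg L \<mu> j + p j) (\<lambda>j. deg L \<mu> j + q j) = x p q"
proof -
  have m: "deg L \<mu> \<in> Nk k" using deg_in_Nk[OF \<mu>] .
  have p: "in_Omega k (\<lambda>_. 0) p" and q: "q \<in> Nk k" and pN: "p \<in> Nk k"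
    using pq in_Omega_zero unfolding in_Omega_def by auto
  have 0: "in_Omega k (\<lambda>_. 0) (\<lambda>j. deg L \<mu> j + p j)"
    using in_Omega_zero Nk_add[OF m pN] .
  have src_x: "src L \<mu> = rng L (x (\<lambda>_. 0) p)"
    using path_in_Mor[OF x p] x0 by simp
  have "y (\<lambda>_. 0) (\<lambda>j. deg L \<mu> j + q j) = cmp L \<mu> (cmp L (x (\<lambda>_. 0) p) (x p q))"
    using initial q path_cmp[OF x p pq] by simp
  also have "\<dots> = cmp L (y (\<lambda>_. 0) (\<lambda>j. deg L \<mu> j + p j)) (x p q)"
    using initial pN cmp_assoc[OF \<mu>] path_in_Mor[OF x p] path_in_Mor[OF x pq] src_x by simp
  finally have "y (\<lambda>_. 0) (\<lambda>j. deg L \<mu> j + q j) = cmp L (y (\<lambda>_. 0) (\<lambda>j. deg L \<mu> j + p j)) (x p q)" .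
  moreover have "src L (y (\<lambda>_. 0) (\<lambda>j. deg L \<mu> j + p j)) = rng L (x p q)"
    using initial pN src_cmp[OF \<mu> _ src_x] path_in_Mor[OF x p] path_in_Mor[OF x pq] by simp
  ultimately show ?thesis
    using path_factors(2)[OF y 0 in_Omega_shift[OF pq m]] path_in_Mor[OF y 0] path_in_Mor[OF x pq]
    by simp
qed

lemma prepend_condition_iff:
  assumes \<mu>: "\<mu> \<in> Mor L" and x: "x \<in> infpaths k L" and x0: "x (\<lambda>_. 0) (\<lambda>_. 0) = src L \<mu>"
    and y: "y \<in> infpaths k L"
  shows "(y (\<lambda>_. 0) (deg L \<mu>) = \<mu> \<and>
      (\<forall>p q. in_Omega k p q \<longrightarrow> y (\<lambda>j. deg L \<mu> j + p j) (\<lambda>j. deg L \<mu> j + q j) = x p q))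
    \<longleftrightarrow> (\<forall>c\<in>Nk k. y (\<lambda>_. 0) (\<lambda>j. deg L \<mu> j + c j) = cmp L \<mu> (x (\<lambda>_. 0) c))"
    (is "?shifted \<longleftrightarrow> ?initial")
proof
  have m: "deg L \<mu> \<in> Nk k" using deg_in_Nk[OF \<mu>] .
  assume shifted: ?shifted
  show ?initial
  proof
    fix c assume c: "c \<in> Nk k"
    have "y (deg L \<mu>) (\<lambda>j. deg L \<mu> j + c j) = x (\<lambda>_. 0) c"
      using shifted in_Omega_zero[OF c] by force
    then show "y (\<lambda>_. 0) (\<lambda>j. deg L \<mu> j + c j) = cmp L \<mu> (x (\<lambda>_. 0) c)"
      using shifted path_cmp[OF y in_Omega_zero[OF m] in_Omega_add[OF m c]] by simp
  qed
next
  assume initial: ?initial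
  then have "y (\<lambda>_. 0) (deg L \<mu>) = cmp L \<mu> (src L \<mu>)"
    using Nk_zero[of k] x0 by fastforce
  then show ?shifted
    using cmp_src_right[OF \<mu>] shifted_path_eq_of_initial[OF assms initial] by simp
qed

lemma prepend_eq_The:
  assumes "\<mu> \<in> Mor L" "x \<in> infpaths k L" "x (\<lambda>_. 0) (\<lambda>_. 0) = src L \<mu>"
  shows "prepend k L \<mu> x = (THE y. y \<in> infpaths k L \<and>
    (\<forall>c\<in>Nk k. y (\<lambda>_. 0) (\<lambda>j. deg L \<mu> j + c j) = cmp L \<mu> (x (\<lambda>_. 0) c)))"
  unfolding prepend_def
proof (rule arg_cong[where f = The], rule ext)
  fix y
  show "(y \<in> infpaths k L \<and> y (\<lambda>_. 0) (deg L \<mu>) = \<mu> \<and>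
      (\<forall>p q. in_Omega k p q \<longrightarrow> y (\<lambda>j. deg L \<mu> j + p j) (\<lambda>j. deg L \<mu> j + q j) = x p q)) =
    (y \<in> infpaths k L \<and>
      (\<forall>c\<in>Nk k. y (\<lambda>_. 0) (\<lambda>j. deg L \<mu> j + c j) = cmp L \<mu> (x (\<lambda>_. 0) c)))"
    using prepend_condition_iff[OF assms, of y] by blast
qed

lemma prepend_eqI:
  assumes \<mu>: "\<mu> \<in> Mor L" and x: "x \<in> infpaths k L" "x (\<lambda>_. 0) (\<lambda>_. 0) = src L \<mu>"
    and y: "y \<in> infpaths k L"
    and initial: "\<And>c. c \<in> Nk k \<Longrightarrow> y (\<lambda>_. 0) (\<lambda>j. deg L \<mu> j + c j) = cmp L \<mu> (x (\<lambda>_. 0) c)"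
  shows "prepend k L \<mu> x = y"
  unfolding prepend_eq_The[OF \<mu> x]
proof (rule the_equality)
  show "y \<in> infpaths k L \<and> (\<forall>c\<in>Nk k. y (\<lambda>_. 0) (\<lambda>j. deg L \<mu> j + c j) = cmp L \<mu> (x (\<lambda>_. 0) c))"
    using y initial by blast
  fix y' assume "y' \<in> infpaths k L \<and>
    (\<forall>c\<in>Nk k. y' (\<lambda>_. 0) (\<lambda>j. deg L \<mu> j + c j) = cmp L \<mu> (x (\<lambda>_. 0) c))"
  then show "y' = y"
    using path_eqI[OF _ y deg_in_Nk[OF \<mu>], of y'] initial by simp
qed

end

section \<open>Products of odometers\<close>

locale odometer_product =
  fixes k :: nat and n :: "nat \<Rightarrow> nat" and L :: "('a, 'b) kgraph_scheme"
    and x :: "nat \<Rightarrow> nat \<Rightarrow> 'a" and act :: "int \<Rightarrow> 'a \<Rightarrow> 'a" and res :: "int \<Rightarrow> 'a \<Rightarrow> int"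
  assumes n_gt_1: "\<And>i. i < k \<Longrightarrow> 1 < n i"
    and product_of_odometers: "product_of_odometers k n L x act res"

sublocale odometer_product \<subseteq> kgraph k L
  using product_of_odometers unfolding product_of_odometers_def by unfold_locales (elim conjE)

context odometer_product
begin

definition vertex :: 'a where "vertex = the_elem (vertices L)"

lemma vertices_eq: "vertices L = {vertex}"
  using product_of_odometers unfolding product_of_odometers_def vertex_def by auto

lemma vertex_in_Mor: "vertex \<in> Mor L" and deg_vertex: "deg L vertex = (\<lambda>_. 0)"
  using vertices_eq unfolding vertices_def by auto

lemma eq_vertex_iff: "a \<in> Mor L \<Longrightarrow> a = vertex \<longleftrightarrow> deg L a = (\<lambda>_. 0)"
  using vertices_eq unfolding vertices_def by auto

lemma rng_eq_vertex: "a \<in> Mor L \<Longrightarrow> rng L a = vertex"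
  using eq_vertex_iff rng_in_Mor deg_rng by blast

lemma src_eq_vertex: "a \<in> Mor L \<Longrightarrow> src L a = vertex"
  using rng_eq_vertex[OF src_in_Mor] rng_src by metis

lemma composable: "a \<in> Mor L \<Longrightarrow> b \<in> Mor L \<Longrightarrow> src L a = rng L b"
  by (simp add: rng_eq_vertex src_eq_vertex)

lemma cmp_in_Mor': "a \<in> Mor L \<Longrightarrow> b \<in> Mor L \<Longrightarrow> cmp L a b \<in> Mor L"
  using cmp_in_Mor composable by blast

lemma deg_cmp': "a \<in> Mor L \<Longrightarrow> b \<in> Mor L \<Longrightarrow> deg L (cmp L a b) = (\<lambda>j. deg L a j + deg L b j)"
  using deg_cmp composable by blast

lemma cmp_assoc': "a \<in> Mor L \<Longrightarrow> b \<in> Mor L \<Longrightarrow> c \<in> Mor L \<Longrightarrow>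
    cmp L (cmp L a b) c = cmp L a (cmp L b c)"
  using cmp_assoc composable by blast

lemma path_origin: "y \<in> infpaths k L \<Longrightarrow> y (\<lambda>_. 0) (\<lambda>_. 0) = vertex"
  using path_in_Mor[OF _ in_Omega_zero[OF Nk_zero]] eq_vertex_iff by simp

lemma self_similar: "self_similar_int k L act res"
  using product_of_odometers unfolding product_of_odometers_def by (elim conjE) assumption

lemma action_axioms: "(\<forall>a\<in>Mor L. act 0 a = a) \<and> (\<forall>g h. \<forall>a\<in>Mor L. act (g + h) a = act g (act h a)) \<and>
    (\<forall>g. bij_betw (act g) (Mor L) (Mor L)) \<and> (\<forall>g. \<forall>a\<in>Mor L. deg L (act g a) = deg L a)"
  using self_similar unfolding self_similar_int_def by (elim conjE) (intro conjI; blast)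

lemma restriction_axioms: "(\<forall>g. \<forall>a\<in>Mor L. \<forall>b\<in>Mor L. src L a = rng L b \<longrightarrow>
        act g (cmp L a b) = cmp L (act g a) (act (res g a) b)) \<and>
    (\<forall>g. \<forall>v\<in>vertices L. res g v = g) \<and>
    (\<forall>g. \<forall>a\<in>Mor L. \<forall>b\<in>Mor L. src L a = rng L b \<longrightarrow> res g (cmp L a b) = res (res g a) b) \<and>
    (\<forall>a\<in>Mor L. res 0 a = 0) \<and> (\<forall>g h. \<forall>a\<in>Mor L. res (g + h) a = res g (act h a) + res h a)"
  using self_similar unfolding self_similar_int_def by (elim conjE) (intro conjI; assumption)

lemma act_0: "a \<in> Mor L \<Longrightarrow> act 0 a = a"
  using action_axioms by simp

lemma act_add: "a \<in> Mor L \<Longrightarrow> act (g + h) a = act g (act h a)"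
  using action_axioms by simp

lemma deg_act: "a \<in> Mor L \<Longrightarrow> deg L (act g a) = deg L a"
  using action_axioms by simp

lemma act_in_Mor: "a \<in> Mor L \<Longrightarrow> act g a \<in> Mor L"
  using action_axioms unfolding bij_betw_def by blast

lemma act_cmp: "a \<in> Mor L \<Longrightarrow> b \<in> Mor L \<Longrightarrow> act g (cmp L a b) = cmp L (act g a) (act (res g a) b)"
  using restriction_axioms composable by simp

lemma res_cmp: "a \<in> Mor L \<Longrightarrow> b \<in> Mor L \<Longrightarrow> res g (cmp L a b) = res (res g a) b"
  using restriction_axioms composable by simp

lemma res_0: "a \<in> Mor L \<Longrightarrow> res 0 a = 0"
  using restriction_axioms by simp

lemma res_add: "a \<in> Mor L \<Longrightarrow> res (g + h) a = res g (act h a) + res h a"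
  using restriction_axioms by simp

lemma res_vertex: "res g vertex = g"
  using restriction_axioms vertices_eq by simp

lemma act_vertex: "act g vertex = vertex"
  using eq_vertex_iff act_in_Mor deg_act vertex_in_Mor deg_vertex by metis

lemma edge_axioms: "\<forall>i<k. {a \<in> Mor L. deg L a = unitvec i} = x i ` {..<n i} \<and> inj_on (x i) {..<n i}"
  using product_of_odometers unfolding product_of_odometers_def by (elim conjE) assumption

lemma generator_axiom: "\<forall>i<k. \<forall>s<n i. act 1 (x i s) = x i ((s + 1) mod n i) \<and>
    res 1 (x i s) = (if s < n i - 1 then 0 else 1)"
  using product_of_odometers unfolding product_of_odometers_def by (elim conjE) assumption

lemma edge_in_Mor: "i < k \<Longrightarrow> s < n i \<Longrightarrow> x i s \<in> Mor L"
  using edge_axioms by blast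

lemma deg_edge: "i < k \<Longrightarrow> s < n i \<Longrightarrow> deg L (x i s) = unitvec i"
  using edge_axioms by blast

lemma edge_cases: "i < k \<Longrightarrow> a \<in> Mor L \<Longrightarrow> deg L a = unitvec i \<Longrightarrow> \<exists>s<n i. a = x i s"
  using edge_axioms by blast

lemma act_1_edge: "i < k \<Longrightarrow> s < n i \<Longrightarrow> act 1 (x i s) = x i ((s + 1) mod n i)"
  using generator_axiom by simp

lemma res_1_edge: "i < k \<Longrightarrow> s < n i \<Longrightarrow> res 1 (x i s) = (if s < n i - 1 then 0 else 1)"
  using generator_axiom by simp

lemma act_res_first_edge:
  assumes i: "i < k"
  shows "act (int m) (x i 0) = x i (m mod n i) \<and> res (int m) (x i 0) = int (m div n i)"
proof (induction m)
  case 0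
  show ?case using n_gt_1[OF i] act_0 res_0 edge_in_Mor[OF i] by simp
next
  case (Suc m)
  have x0: "x i 0 \<in> Mor L" and r: "m mod n i < n i"
    using edge_in_Mor[OF i] n_gt_1[OF i] by simp_all
  have "act (int (Suc m)) (x i 0) = act 1 (act (int m) (x i 0))"
    using act_add[OF x0, of 1 "int m"] by (simp add: add.commute)
  also have "\<dots> = x i (Suc m mod n i)"
    using Suc act_1_edge[OF i r] by (simp add: mod_Suc_eq)
  finally have act: "act (int (Suc m)) (x i 0) = x i (Suc m mod n i)" .
  have "res (int (Suc m)) (x i 0) = res 1 (act (int m) (x i 0)) + res (int m) (x i 0)"
    using res_add[OF x0, of 1 "int m"] by (simp add: add.commute)
  also have "\<dots> = (if m mod n i < n i - 1 then 0 else 1) + int (m div n i)"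
    using Suc res_1_edge[OF i r] by simp
  also have "\<dots> = int (Suc m div n i)"
    using r by (auto simp: div_Suc mod_Suc)
  finally show ?case using act by simp
qed

definition npow :: "(nat \<Rightarrow> nat) \<Rightarrow> nat" where
  "npow m = (\<Prod>i<k. n i ^ m i)"

lemma npow_add: "npow (\<lambda>j. a j + b j) = npow a * npow b"
  by (simp add: npow_def power_add prod.distrib)

lemma npow_pos: "0 < npow m"
  unfolding npow_def by (rule prod_pos) (use n_gt_1 in force)

lemma npow_zero: "npow (\<lambda>_. 0) = 1"
  by (simp add: npow_def)

lemma npow_unitvec:
  assumes "i < k"
  shows "npow (unitvec i) = n i"
proof -
  have "npow (unitvec i) = (\<Prod>j<k. if j = i then n i else 1)"
    unfolding npow_def by (rule prod.cong) (auto simp: unitvec_def)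
  then show ?thesis
    using assms by simp
qed

section \<open>Zero paths\<close>

text \<open>The zero path of degree \<open>m\<close> is the composite of the edges \<open>x i 0\<close>; it identifies
  the action of \<open>\<int>\<close> on paths of degree \<open>m\<close> with the odometer on \<open>\<int>/npow m\<close>.\<close>

definition is_zero_path :: "'a \<Rightarrow> (nat \<Rightarrow> nat) \<Rightarrow> bool" where
  "is_zero_path z m \<longleftrightarrow> z \<in> Mor L \<and> deg L z = m \<and>
     (\<forall>j::nat. res (int j) z = int (j div npow m)) \<and> (\<forall>j::nat. act (int (npow m) * int j) z = z)"

definition orbit_covers :: "'a \<Rightarrow> (nat \<Rightarrow> nat) \<Rightarrow> bool" where
  "orbit_covers z m \<longleftrightarrow> (\<forall>\<gamma>\<in>Mor L. deg L \<gamma> = m \<longrightarrow> (\<exists>J::nat. \<gamma> = act (int J) z))"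

lemma is_zero_path_cmp:
  assumes a: "is_zero_path a ma" and b: "is_zero_path b mb"
  shows "is_zero_path (cmp L a b) (\<lambda>j. ma j + mb j)"
proof -
  have aM: "a \<in> Mor L" and bM: "b \<in> Mor L" using a b unfolding is_zero_path_def by auto
  have "res (int j) (cmp L a b) = int (j div npow (\<lambda>j. ma j + mb j))" for j
    using a b res_cmp[OF aM bM] unfolding is_zero_path_def by (simp add: npow_add div_mult2_eq)
  moreover have "act (int (npow (\<lambda>j. ma j + mb j) * j)) (cmp L a b) = cmp L a b" for j
  proof -
    have "res (int (npow ma * (npow mb * j))) a = int (npow ma * (npow mb * j) div npow ma)"
      using a unfolding is_zero_path_def by blast
    then have "res (int (npow ma * (npow mb * j))) a = int (npow mb * j)"
      using npow_pos[of ma] by simp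
    moreover have "act (int (npow ma) * int (npow mb * j)) a = a"
      using a unfolding is_zero_path_def by blast
    ultimately show ?thesis
      using a b act_cmp[OF aM bM] unfolding is_zero_path_def by (simp add: npow_add mult.assoc)
  qed
  ultimately show ?thesis
    using a b cmp_in_Mor'[OF aM bM] deg_cmp'[OF aM bM] unfolding is_zero_path_def by simp
qed

lemma is_zero_path_vertex: "is_zero_path vertex (\<lambda>_. 0)"
  unfolding is_zero_path_def using vertex_in_Mor deg_vertex res_vertex act_vertex npow_zero by simp

lemma is_zero_path_edge:
  assumes i: "i < k"
  shows "is_zero_path (x i 0) (unitvec i)"
proof -
  have "act (int (n i * j)) (x i 0) = x i 0" for j
    using act_res_first_edge[OF i, of "n i * j"] by simp
  then show ?thesis
    unfolding is_zero_path_def npow_unitvec[OF i]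
    using edge_in_Mor[OF i] deg_edge[OF i] act_res_first_edge[OF i] n_gt_1[OF i] by simp
qed

lemma orbit_covers_edge_cmp:
  assumes i: "i < k" and m': "m' \<in> Nk k" and z': "z' \<in> Mor L" "orbit_covers z' m'"
  shows "orbit_covers (cmp L (x i 0) z') (\<lambda>j. unitvec i j + m' j)"
  unfolding orbit_covers_def
proof (intro ballI impI)
  fix \<gamma> assume "\<gamma> \<in> Mor L" "deg L \<gamma> = (\<lambda>j. unitvec i j + m' j)"
  then obtain e \<gamma>' where e: "e \<in> Mor L" "\<gamma>' \<in> Mor L" "deg L e = unitvec i" "deg L \<gamma>' = m'"
    "\<gamma> = cmp L e \<gamma>'"
    using factorisation_exists[OF _ Nk_unitvec[OF i] m'] by metis
  obtain t where t: "t < n i" "e = x i t" using edge_cases[OF i e(1,3)] by auto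
  obtain J where J: "\<gamma>' = act (int J) z'" using z'(2) e unfolding orbit_covers_def by auto
  have "act (int (t + n i * J)) (cmp L (x i 0) z') = \<gamma>"
    using act_cmp[OF edge_in_Mor[OF i] z'(1)] act_res_first_edge[OF i, of "t + n i * J"] t J e(5)
      n_gt_1[OF i] by simp
  then show "\<exists>J::nat. \<gamma> = act (int J) (cmp L (x i 0) z')" by metis
qed

lemma zero_path_exists: "m \<in> Nk k \<Longrightarrow> \<exists>z. is_zero_path z m \<and> orbit_covers z m"
proof (induction "sum m {..<k}" arbitrary: m)
  case 0
  then have m: "m = (\<lambda>_. 0)"
    by (auto simp: Nk_def fun_eq_iff not_less[symmetric])
  have "orbit_covers vertex m"
    unfolding orbit_covers_def m using eq_vertex_iff act_vertex by metis
  then show ?case using is_zero_path_vertex m by auto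
next
  case (Suc s)
  then obtain i where i: "i < k" "0 < m i"
    by (metis lessThan_iff not_gr_zero sum.neutral nat.simps(3))
  define m' where "m' = m(i := m i - 1)"
  have m: "m = (\<lambda>j. unitvec i j + m' j)" and m': "m' \<in> Nk k"
    using i Suc.prems unfolding m'_def unitvec_def Nk_def by auto
  have "sum m {..<k} = sum (unitvec i) {..<k} + sum m' {..<k}"
    by (subst m) (simp add: sum.distrib)
  then have "s = sum m' {..<k}"
    using Suc.hyps(2) i(1) by (simp add: unitvec_def)
  then obtain z' where z': "is_zero_path z' m'" "orbit_covers z' m'"
    using Suc.hyps(1) m' by blast
  then show ?case
    using is_zero_path_cmp[OF is_zero_path_edge[OF i(1)] z'(1)] m
      orbit_covers_edge_cmp[OF i(1) m' _ z'(2)] unfolding is_zero_path_def by auto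
qed

definition zero_path :: "(nat \<Rightarrow> nat) \<Rightarrow> 'a" where
  "zero_path m = (SOME z. is_zero_path z m \<and> orbit_covers z m)"

lemma zero_path: "m \<in> Nk k \<Longrightarrow> is_zero_path (zero_path m) m \<and> orbit_covers (zero_path m) m"
  unfolding zero_path_def using zero_path_exists by (rule someI_ex)

lemma zero_path_in_Mor: "m \<in> Nk k \<Longrightarrow> zero_path m \<in> Mor L"
  and deg_zero_path: "m \<in> Nk k \<Longrightarrow> deg L (zero_path m) = m"
  and res_zero_path: "m \<in> Nk k \<Longrightarrow> res (int j) (zero_path m) = int (j div npow m)"
  and act_npow_zero_path: "m \<in> Nk k \<Longrightarrow> act (int (npow m) * int j) (zero_path m) = zero_path m"
  using zero_path unfolding is_zero_path_def by auto

lemma act_zero_path_mod: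
  "m \<in> Nk k \<Longrightarrow> act (int (J + npow m * s)) (zero_path m) = act (int J) (zero_path m)"
  using act_add[OF zero_path_in_Mor, of m "int J" "int (npow m * s)"] act_npow_zero_path by simp

lemma zero_path_orbit:
  assumes m: "m \<in> Nk k" and \<gamma>: "\<gamma> \<in> Mor L" "deg L \<gamma> = m"
  obtains J where "J < npow m" "\<gamma> = act (int J) (zero_path m)"
proof -
  obtain J where "\<gamma> = act (int J) (zero_path m)"
    using zero_path[OF m] \<gamma> unfolding orbit_covers_def by auto
  then have "\<gamma> = act (int (J mod npow m)) (zero_path m)"
    using act_zero_path_mod[OF m, of "J mod npow m" "J div npow m"] by simp
  then show ?thesis
    using that[of "J mod npow m"] npow_pos[of m] by simp
qed

text \<open>The restriction to the zero path records the carry, which detects any translation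
  that is not a multiple of \<open>npow m\<close>.\<close>

lemma npow_dvd_of_res_act:
  assumes m: "m \<in> Nk k"
    and res: "\<And>j. res (int j) (act (int K) (zero_path m)) = int (j div npow m)"
  shows "npow m dvd K"
proof (rule dvd_of_div_add_eq[OF npow_pos])
  fix j
  have "res (int j + int K) (zero_path m) = res (int j) (act (int K) (zero_path m)) + res (int K) (zero_path m)"
    using res_add zero_path_in_Mor[OF m] by blast
  then show "(j + K) div npow m = j div npow m + K div npow m"
    using res res_zero_path[OF m] by (metis of_nat_add of_nat_eq_iff)
qed

lemma zero_path_unique:
  assumes m: "m \<in> Nk k" and z: "is_zero_path z m"
  shows "z = zero_path m"
proof -
  obtain K where K: "z = act (int K) (zero_path m)"
    using zero_path_orbit[OF m] z unfolding is_zero_path_def by metis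
  then have "npow m dvd K"
    using npow_dvd_of_res_act[OF m] z unfolding is_zero_path_def by blast
  then show ?thesis
    using K act_npow_zero_path[OF m] by auto
qed

lemma zero_path_add:
  "a \<in> Nk k \<Longrightarrow> b \<in> Nk k \<Longrightarrow> cmp L (zero_path a) (zero_path b) = zero_path (\<lambda>j. a j + b j)"
  using zero_path_unique[OF Nk_add] is_zero_path_cmp zero_path by blast

lemma zero_path_zero: "zero_path (\<lambda>_. 0) = vertex"
  using zero_path_unique[OF Nk_zero is_zero_path_vertex] by simp

lemma act_zero_path_eq_imp_dvd:
  assumes m: "m \<in> Nk k" and eq: "act (int t) (zero_path m) = act (int t') (zero_path m)"
  shows "int (npow m) dvd int t - int t'"
proof -
  have Z: "zero_path m \<in> Mor L" using zero_path_in_Mor[OF m] .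
  have "npow m dvd t - t'"
    if eq: "act (int t) (zero_path m) = act (int t') (zero_path m)" and le: "t' \<le> t" for t t'
  proof (rule npow_dvd_of_res_act[OF m])
    have "act (int t - int t') (zero_path m) = act (- int t') (act (int t) (zero_path m))"
      using act_add[OF Z, of "- int t'" "int t"] by simp
    also have "\<dots> = zero_path m"
      using eq act_add[OF Z, of "- int t'" "int t'"] act_0[OF Z] by simp
    finally show "res (int j) (act (int (t - t')) (zero_path m)) = int (j div npow m)" for j
      using res_zero_path[OF m] le by simp
  qed
  then have "int (npow m) dvd int t - int t'"
    if "act (int t) (zero_path m) = act (int t') (zero_path m)" "t' \<le> t" for t t'
    using that by (metis int_dvd_int_iff of_nat_diff)
  then show ?thesis
    using eq by (metis dvd_diff_commute nle_le)
qed

section \<open>Orbits of the infinite zero path\<close>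

lemma npow_diff: "in_Omega k p q \<Longrightarrow> npow q = npow p * npow (\<lambda>j. q j - p j)"
  using npow_add[of p "\<lambda>j. q j - p j"] by (simp add: in_Omega_def le_fun_def)

text \<open>The infinite path \<open>t \<cdot> 000\<dots>\<close>.\<close>

definition orbit_path :: "nat \<Rightarrow> (nat \<Rightarrow> nat) \<Rightarrow> (nat \<Rightarrow> nat) \<Rightarrow> 'a" where
  "orbit_path t = (\<lambda>p q. if in_Omega k p q
     then act (int (t div npow p)) (zero_path (\<lambda>j. q j - p j)) else undefined)"

lemma orbit_path_initial: "q \<in> Nk k \<Longrightarrow> orbit_path t (\<lambda>_. 0) q = act (int t) (zero_path q)"
  unfolding orbit_path_def using in_Omega_zero npow_zero by simp

lemma orbit_path_in_infpaths: "orbit_path t \<in> infpaths k L"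
  unfolding infpaths_def mem_Collect_eq
proof (intro conjI allI impI)
  fix p q assume pq: "in_Omega k p q"
  have pN: "p \<in> Nk k" and qN: "q \<in> Nk k" and d: "(\<lambda>j. q j - p j) \<in> Nk k"
    using pq Nk_diff unfolding in_Omega_def by auto
  have vertex: "orbit_path t r r = vertex" if "r \<in> Nk k" for r
    using that zero_path_zero act_vertex unfolding orbit_path_def in_Omega_def by simp
  show "orbit_path t p q \<in> Mor L" "deg L (orbit_path t p q) = (\<lambda>j. q j - p j)"
    using pq act_in_Mor deg_act zero_path_in_Mor[OF d] deg_zero_path[OF d]
    unfolding orbit_path_def by simp_all
  then show "rng L (orbit_path t p q) = orbit_path t p p" "src L (orbit_path t p q) = orbit_path t q q"
    using rng_eq_vertex src_eq_vertex vertex pN qN by simp_all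
next
  fix p q r assume pq: "in_Omega k p q" and qr: "in_Omega k q r"
  have d1: "(\<lambda>j. q j - p j) \<in> Nk k" and d2: "(\<lambda>j. r j - q j) \<in> Nk k"
    using pq qr Nk_diff unfolding in_Omega_def by auto
  have "(\<lambda>j. (q j - p j) + (r j - q j)) = (\<lambda>j. r j - p j)"
    using pq qr unfolding in_Omega_def le_fun_def by auto
  then have "zero_path (\<lambda>j. r j - p j) = cmp L (zero_path (\<lambda>j. q j - p j)) (zero_path (\<lambda>j. r j - q j))"
    using zero_path_add[OF d1 d2] by simp
  moreover have "res (int (t div npow p)) (zero_path (\<lambda>j. q j - p j)) = int (t div npow q)"
    using res_zero_path[OF d1] npow_diff[OF pq] by (simp add: div_mult2_eq)
  ultimately show "cmp L (orbit_path t p q) (orbit_path t q r) = orbit_path t p r"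
    using pq qr in_Omega_trans[OF pq qr] act_cmp[OF zero_path_in_Mor[OF d1] zero_path_in_Mor[OF d2]]
    unfolding orbit_path_def by simp
qed (simp add: orbit_path_def)

lemma act_inf_orbit_path:
  assumes "g + int t = int t'"
  shows "act_inf k act res g (orbit_path t) = orbit_path t'"
proof (intro ext)
  fix p q
  show "act_inf k act res g (orbit_path t) p q = orbit_path t' p q"
  proof (cases "in_Omega k p q")
    case True
    then have pN: "p \<in> Nk k" and d: "(\<lambda>j. q j - p j) \<in> Nk k"
      using Nk_diff unfolding in_Omega_def by auto
    have "res (g + int t) (zero_path p) = res g (act (int t) (zero_path p)) + res (int t) (zero_path p)"
      using res_add zero_path_in_Mor[OF pN] by blast
    then have r: "res g (orbit_path t (\<lambda>_. 0) p) = int (t' div npow p) - int (t div npow p)"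
      using assms res_zero_path[OF pN] orbit_path_initial[OF pN] by simp
    have "act_inf k act res g (orbit_path t) p q =
        act (res g (orbit_path t (\<lambda>_. 0) p)) (act (int (t div npow p)) (zero_path (\<lambda>j. q j - p j)))"
      using True unfolding act_inf_def by (simp add: orbit_path_def[of t])
    also have "\<dots> = act (int (t' div npow p)) (zero_path (\<lambda>j. q j - p j))"
      unfolding r act_add[OF zero_path_in_Mor[OF d], symmetric] by simp
    finally show ?thesis
      using True unfolding orbit_path_def by simp
  next
    case False
    then show ?thesis unfolding act_inf_def orbit_path_def by simp
  qed
qed

lemma prepend_orbit_path:
  assumes a: "a \<in> Nk k" and K: "K < npow a"
  shows "prepend k L (act (int K) (zero_path a)) (orbit_path J) = orbit_path (K + npow a * J)"
proof (rule prepend_eqI)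
  let ?\<mu> = "act (int K) (zero_path a)"
  have Za: "zero_path a \<in> Mor L" using zero_path_in_Mor[OF a] .
  show \<mu>: "?\<mu> \<in> Mor L" using act_in_Mor[OF Za] .
  show "orbit_path J \<in> infpaths k L" "orbit_path (K + npow a * J) \<in> infpaths k L"
    using orbit_path_in_infpaths by simp_all
  show "orbit_path J (\<lambda>_. 0) (\<lambda>_. 0) = src L ?\<mu>"
    using path_origin[OF orbit_path_in_infpaths] src_eq_vertex[OF \<mu>] by simp
  fix c assume c: "c \<in> Nk k"
  have "res (int (K + npow a * J)) (zero_path a) = int J"
    using res_zero_path[OF a, of "K + npow a * J"] K by simp
  then have "act (int (K + npow a * J)) (zero_path (\<lambda>j. a j + c j)) =
      cmp L ?\<mu> (act (int J) (zero_path c))"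
    using act_cmp[OF Za zero_path_in_Mor[OF c]] zero_path_add[OF a c] act_zero_path_mod[OF a]
    by metis
  then show "orbit_path (K + npow a * J) (\<lambda>_. 0) (\<lambda>j. deg L ?\<mu> j + c j) =
      cmp L ?\<mu> (orbit_path J (\<lambda>_. 0) c)"
    using orbit_path_initial[OF c] orbit_path_initial[OF Nk_add[OF a c]] deg_act[OF Za] deg_zero_path[OF a]
    by simp
qed

lemma orbit_path_eq_imp_dvd:
  "m \<in> Nk k \<Longrightarrow> orbit_path t = orbit_path t' \<Longrightarrow> int (npow m) dvd int t - int t'"
  using act_zero_path_eq_imp_dvd orbit_path_initial by metis

section \<open>Periods\<close>

lemma orbit_path_eq_of_cycline:
  assumes cyc: "cycline k L act res \<mu> g \<nu>"
    and a: "a \<in> Nk k" "K < npow a" "\<mu> = act (int K) (zero_path a)"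
    and b: "b \<in> Nk k" "K' < npow b" "\<nu> = act (int K') (zero_path b)"
    and J: "0 \<le> g + int J"
  shows "orbit_path (K + npow a * nat (g + int J)) = orbit_path (K' + npow b * J)"
proof -
  have "orbit_path J \<in> infpaths_from k L (src L \<nu>)"
    unfolding infpaths_from_def b(3)
    using orbit_path_in_infpaths path_origin[OF orbit_path_in_infpaths]
      src_eq_vertex[OF act_in_Mor[OF zero_path_in_Mor[OF b(1)]]] by simp
  then have "prepend k L \<mu> (act_inf k act res g (orbit_path J)) = prepend k L \<nu> (orbit_path J)"
    using cyc unfolding cycline_def by blast
  then show ?thesis
    using J act_inf_orbit_path[of g J "nat (g + int J)"]
      prepend_orbit_path[OF a(1,2)] prepend_orbit_path[OF b(1,2)] a(3) b(3) by simp
qed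

lemma npow_deg_eq_of_cycline:
  assumes cyc: "cycline k L act res \<mu> g \<nu>"
  shows "npow (deg L \<mu>) = npow (deg L \<nu>)"
proof -
  have \<mu>: "\<mu> \<in> Mor L" and \<nu>: "\<nu> \<in> Mor L" using cyc unfolding cycline_def by auto
  define a b where "a = deg L \<mu>" and "b = deg L \<nu>"
  have a: "a \<in> Nk k" and b: "b \<in> Nk k" using deg_in_Nk \<mu> \<nu> unfolding a_def b_def by auto
  obtain K where K: "K < npow a" "\<mu> = act (int K) (zero_path a)"
    using zero_path_orbit[OF a \<mu> a_def[symmetric]] by blast
  obtain K' where K': "K' < npow b" "\<nu> = act (int K') (zero_path b)"
    using zero_path_orbit[OF b \<nu> b_def[symmetric]] by blast
  have dvd: "int (npow a * npow b) dvd int (K + npow a * nat (g + int J)) - int (K' + npow b * J)"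
    if "0 \<le> g + int J" for J
    using orbit_path_eq_imp_dvd[OF Nk_add[OF a b] orbit_path_eq_of_cycline[OF cyc a K b K' that]]
    by (simp only: npow_add)
  define J where "J = nat (- g)"
  define T where "T = nat (g + int J)"
  have J: "0 \<le> g + int J" "0 \<le> g + int (J + 1)" and T: "nat (g + int (J + 1)) = T + 1"
    unfolding J_def T_def by auto
  have "int (npow a * npow b) dvd
      (int (K + npow a * (T + 1)) - int (K' + npow b * (J + 1))) -
      (int (K + npow a * T) - int (K' + npow b * J))"
    using dvd_diff[OF dvd[OF J(2)] dvd[OF J(1)]] unfolding T T_def .
  moreover have "(int (K + npow a * (T + 1)) - int (K' + npow b * (J + 1))) -
      (int (K + npow a * T) - int (K' + npow b * J)) = int (npow a) - int (npow b)"
    by (simp add: algebra_simps)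
  ultimately have "int (npow a) * int (npow b) dvd int (npow a) - int (npow b)"
    by simp
  then show ?thesis
    using mult_dvd_diff_imp_eq npow_pos unfolding a_def b_def by (metis of_nat_0_less_iff of_nat_eq_iff)
qed

lemma initial_segment_zero_orbit:
  assumes y: "y \<in> infpaths k L" and qQ: "in_Omega k q Q"
    and Q: "y (\<lambda>_. 0) Q = act (int J) (zero_path Q)"
  shows "y (\<lambda>_. 0) q = act (int J) (zero_path q)"
proof -
  have q: "q \<in> Nk k" and d: "(\<lambda>j. Q j - q j) \<in> Nk k"
    using qQ Nk_diff unfolding in_Omega_def by auto
  have "(\<lambda>j. q j + (Q j - q j)) = Q"
    using qQ unfolding in_Omega_def le_fun_def by auto
  then have "y (\<lambda>_. 0) Q = cmp L (act (int J) (zero_path q))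
      (act (res (int J) (zero_path q)) (zero_path (\<lambda>j. Q j - q j)))"
    using Q zero_path_add[OF q d] act_cmp[OF zero_path_in_Mor[OF q] zero_path_in_Mor[OF d]] by simp
  then show ?thesis
    by (rule path_factors(1)[OF y in_Omega_zero[OF q] qQ, rotated -1])
      (simp_all add: act_in_Mor zero_path_in_Mor[OF q] zero_path_in_Mor[OF d] composable
        deg_act deg_zero_path[OF q])
qed

lemma zero_path_cmp_act:
  assumes a: "a \<in> Nk k" and c: "c \<in> Nk k"
  shows "cmp L (zero_path a) (act (int J) (zero_path c)) =
    act (int (npow a * J)) (zero_path (\<lambda>j. a j + c j))"
proof -
  have "res (int (npow a * J)) (zero_path a) = int J"
    using res_zero_path[OF a, of "npow a * J"] npow_pos[of a] by simp
  moreover have "act (int (npow a * J)) (zero_path a) = zero_path a"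
    using act_npow_zero_path[OF a] by simp
  ultimately show ?thesis
    using zero_path_add[OF a c] act_cmp[OF zero_path_in_Mor[OF a] zero_path_in_Mor[OF c]] by metis
qed

text \<open>With \<open>S = a + b + c\<close> and \<open>w(0, S) = J \<cdot> 0\<^sub>S\<close> one computes
  \<open>0\<^sub>a (J \<cdot> 0\<^sub>b\<^sub>+\<^sub>c) = (npow a \<cdot> J) \<cdot> 0\<^sub>S = (npow b \<cdot> J) \<cdot> 0\<^sub>S = 0\<^sub>b (J \<cdot> 0\<^sub>a\<^sub>+\<^sub>c)\<close>.\<close>

lemma zero_path_prefix_transfer:
  assumes a: "a \<in> Nk k" and b: "b \<in> Nk k" and npow_eq: "npow a = npow b"
    and w: "w \<in> infpaths k L" and y: "y \<in> infpaths k L"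
    and prefix_a: "\<And>c. c \<in> Nk k \<Longrightarrow> y (\<lambda>_. 0) (\<lambda>j. a j + c j) = cmp L (zero_path a) (w (\<lambda>_. 0) c)"
    and c: "c \<in> Nk k"
  shows "y (\<lambda>_. 0) (\<lambda>j. b j + c j) = cmp L (zero_path b) (w (\<lambda>_. 0) c)"
proof -
  define S where "S = (\<lambda>j. a j + (b j + c j))"
  have bc: "(\<lambda>j. b j + c j) \<in> Nk k" and ac: "(\<lambda>j. a j + c j) \<in> Nk k" and S: "S \<in> Nk k"
    using a b c unfolding S_def Nk_def by auto
  have S': "(\<lambda>j. b j + (a j + c j)) = S"
    unfolding S_def by (simp add: add.left_commute)
  have \<Omega>: "in_Omega k (\<lambda>j. b j + c j) S" "in_Omega k (\<lambda>j. a j + c j) S"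
    "in_Omega k c (\<lambda>j. a j + c j)" "in_Omega k (\<lambda>_. 0) c"
    using a b c S unfolding S_def in_Omega_def le_fun_def Nk_def by auto
  have "w (\<lambda>_. 0) S \<in> Mor L" "deg L (w (\<lambda>_. 0) S) = S"
    using path_in_Mor(1,2)[OF w in_Omega_zero[OF S]] by simp_all
  then obtain J where J: "w (\<lambda>_. 0) S = act (int J) (zero_path S)"
    using zero_path_orbit[OF S] by metis
  have "y (\<lambda>_. 0) S = cmp L (zero_path a) (act (int J) (zero_path (\<lambda>j. b j + c j)))"
    using prefix_a[OF bc] initial_segment_zero_orbit[OF w \<Omega>(1) J] unfolding S_def by simp
  also have "\<dots> = cmp L (zero_path b) (act (int J) (zero_path (\<lambda>j. a j + c j)))"
    using zero_path_cmp_act[OF a bc] zero_path_cmp_act[OF b ac] npow_eq S' unfolding S_def by simp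
  also have "\<dots> = cmp L (cmp L (zero_path b) (w (\<lambda>_. 0) c)) (w c (\<lambda>j. a j + c j))"
    using initial_segment_zero_orbit[OF w \<Omega>(2) J] path_cmp[OF w \<Omega>(4,3)]
      cmp_assoc'[OF zero_path_in_Mor[OF b]] path_in_Mor[OF w \<Omega>(4)] path_in_Mor[OF w \<Omega>(3)] by simp
  finally show ?thesis
    by (rule path_factors(1)[OF y in_Omega_zero[OF bc] \<Omega>(1), rotated -1])
      (simp_all add: cmp_in_Mor' path_in_Mor(1,2)[OF w \<Omega>(4)] path_in_Mor(1,2)[OF w \<Omega>(3)]
        zero_path_in_Mor[OF b] deg_cmp' deg_zero_path[OF b] composable)
qed

lemma prepend_zero_path_eq:
  assumes a: "a \<in> Nk k" and b: "b \<in> Nk k" and npow_eq: "npow a = npow b"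
    and w: "w \<in> infpaths k L"
  shows "prepend k L (zero_path a) w = prepend k L (zero_path b) w"
proof -
  have origin: "w (\<lambda>_. 0) (\<lambda>_. 0) = src L (zero_path m)" if "m \<in> Nk k" for m
    using path_origin[OF w] src_eq_vertex[OF zero_path_in_Mor[OF that]] by simp
  have "(y \<in> infpaths k L \<and>
        (\<forall>c\<in>Nk k. y (\<lambda>_. 0) (\<lambda>j. a j + c j) = cmp L (zero_path a) (w (\<lambda>_. 0) c))) \<longleftrightarrow>
      (y \<in> infpaths k L \<and>
        (\<forall>c\<in>Nk k. y (\<lambda>_. 0) (\<lambda>j. b j + c j) = cmp L (zero_path b) (w (\<lambda>_. 0) c)))" for y
    using zero_path_prefix_transfer[OF a b npow_eq w, of y]
      zero_path_prefix_transfer[OF b a npow_eq[symmetric] w, of y] by blast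
  then show ?thesis
    unfolding prepend_eq_The[OF zero_path_in_Mor[OF a] w origin[OF a]]
      prepend_eq_The[OF zero_path_in_Mor[OF b] w origin[OF b]]
      deg_zero_path[OF a] deg_zero_path[OF b]
    by simp
qed

lemma act_inf_0:
  assumes y: "y \<in> infpaths k L"
  shows "act_inf k act res 0 y = y"
proof (intro ext)
  fix p q
  show "act_inf k act res 0 y p q = y p q"
  proof (cases "in_Omega k p q")
    case True
    then have "y (\<lambda>_. 0) p \<in> Mor L" "y p q \<in> Mor L"
      using path_in_Mor[OF y] in_Omega_zero unfolding in_Omega_def by auto
    then show ?thesis
      using True res_0 act_0 unfolding act_inf_def by simp
  next
    case False
    then show ?thesis
      using y unfolding act_inf_def infpaths_def by simp
  qed
qed

lemma cycline_zero_paths: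
  assumes a: "a \<in> Nk k" and b: "b \<in> Nk k" and npow_eq: "npow a = npow b"
  shows "cycline k L act res (zero_path a) 0 (zero_path b)"
  unfolding cycline_def infpaths_from_def
proof (intro conjI ballI)
  show "zero_path a \<in> Mor L" "zero_path b \<in> Mor L"
    using zero_path_in_Mor a b by simp_all
  then show "src L (zero_path a) = act 0 (src L (zero_path b))"
    using src_eq_vertex act_vertex by simp
  fix w assume "w \<in> {w \<in> infpaths k L. w (\<lambda>_. 0) (\<lambda>_. 0) = src L (zero_path b)}"
  then show "prepend k L (zero_path a) (act_inf k act res 0 w) = prepend k L (zero_path b) w"
    using act_inf_0 prepend_zero_path_eq[OF a b npow_eq] by simp
qed

lemma prod_powi_diff:
  "(\<Prod>i<k. real (n i) powi (int (a i) - int (b i))) = real (npow a) / real (npow b)"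
proof -
  have "(\<Prod>i<k. real (n i) powi (int (a i) - int (b i))) = (\<Prod>i<k. real (n i) ^ a i / real (n i) ^ b i)"
  proof (rule prod.cong)
    fix i assume "i \<in> {..<k}"
    then have "real (n i) \<noteq> 0" using n_gt_1 by fastforce
    then show "real (n i) powi (int (a i) - int (b i)) = real (n i) ^ a i / real (n i) ^ b i"
      by (simp add: power_int_diff)
  qed simp
  also have "\<dots> = real (npow a) / real (npow b)"
    unfolding npow_def by (simp add: prod_dividef)
  finally show ?thesis .
qed

lemma Per_GL_subset: "Per_GL k L act res \<subseteq> {p \<in> Zk k. (\<Prod>i<k. real (n i) powi p i) = 1}"
proof
  fix p assume "p \<in> Per_GL k L act res"
  then obtain \<mu> g \<nu> where p: "p = degdiff L \<mu> \<nu>" and cyc: "cycline k L act res \<mu> g \<nu>"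
    unfolding Per_GL_def by blast
  have "\<mu> \<in> Mor L" "\<nu> \<in> Mor L" using cyc unfolding cycline_def by auto
  then have "p \<in> Zk k"
    using deg_in_Nk unfolding p degdiff_def Zk_def Nk_def by simp
  moreover have "(\<Prod>i<k. real (n i) powi p i) = 1"
    using npow_deg_eq_of_cycline[OF cyc] npow_pos[of "deg L \<nu>"]
    unfolding p degdiff_def prod_powi_diff by simp
  ultimately show "p \<in> {p \<in> Zk k. (\<Prod>i<k. real (n i) powi p i) = 1}" by simp
qed

lemma subset_Per_L: "{p \<in> Zk k. (\<Prod>i<k. real (n i) powi p i) = 1} \<subseteq> Per_L k L act res"
proof
  fix p assume "p \<in> {p \<in> Zk k. (\<Prod>i<k. real (n i) powi p i) = 1}"
  then have p: "p \<in> Zk k" "(\<Prod>i<k. real (n i) powi p i) = 1" by simp_all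
  define a b where "a = (\<lambda>j. nat (p j))" and "b = (\<lambda>j. nat (- p j))"
  have a: "a \<in> Nk k" and b: "b \<in> Nk k"
    using p(1) unfolding a_def b_def Zk_def Nk_def by auto
  have p_ab: "p = (\<lambda>j. int (a j) - int (b j))"
    unfolding a_def b_def by auto
  have "real (npow a) / real (npow b) = 1"
    using p(2) unfolding p_ab prod_powi_diff .
  then have "npow a = npow b"
    using npow_pos[of b] by simp
  then have "cycline k L act res (zero_path a) 0 (zero_path b)"
    using cycline_zero_paths[OF a b] by simp
  moreover have "degdiff L (zero_path a) (zero_path b) = p"
    unfolding degdiff_def deg_zero_path[OF a] deg_zero_path[OF b] p_ab ..
  ultimately show "p \<in> Per_L k L act res"
    unfolding Per_L_def by blast
qed

end

theorem theorem7p5: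
  fixes k :: nat and n :: "nat \<Rightarrow> nat" and L :: "('a, 'b) kgraph_scheme"
    and x :: "nat \<Rightarrow> nat \<Rightarrow> 'a" and act :: "int \<Rightarrow> 'a \<Rightarrow> 'a" and res :: "int \<Rightarrow> 'a \<Rightarrow> int"
  assumes "k \<ge> 1"
    and "\<forall>i<k. n i > 1"
    and "product_of_odometers k n L x act res"
  shows "Per_GL k L act res = Per_L k L act res \<and>
         Per_L k L act res = {p \<in> Zk k. (\<Prod>i<k. (real (n i)) powi (p i)) = 1}"
proof -
  interpret odometer_product k n L x act res
    using assms(2,3) by unfold_locales simp_all
  have "Per_L k L act res \<subseteq> Per_GL k L act res"
    unfolding Per_L_def Per_GL_def by blast
  then show ?thesis
    using Per_GL_subset subset_Per_L by blast
qed

end
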